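(* Suppose $A,B\in M_N(\mathbb C)$ are simultaneously diagonalizable, with a common basis of eigenvectors $v_1,\dots,v_N$, $Av_i=\lambda_iv_i$, $Bv_i=\gamma_iv_i$, all $\lambda_i$ real and positive. Let $u=0$, $\theta=1$, $m\in\mathbb N$, $h=\tau/m$, $\mu_i=\gamma_i/\lambda_i$, let $\lambda_j=\max_i\lambda_i$ and $y_j=-\lambda_jh$. If $\mu_i\in D_{y_j}$ for every $i=1,\dots,N$, then the $\theta$-method is stable.
   Context: Let $\tau>0$ and consider $y'(t)=-Ay(t)+By(t-\tau)$. With $u=0$, $\theta=1$, the $\theta$-method with step $h=\tau/m$ is the recursion $y_{n+1}=y_n+h\big[-Ay_{n+1}+By_{n-m+1}\big]$, $n\ge0$, with arbitrary starting values $y_{-m},\dots,y_0\in\mathbb C^N$; it is called stable if $y_n\to0$ as $n\to\infty$ for every choice of starting values. For $y<0$, $D_y$ is the set of $\mu\in\mathbb C$ such that every root $\xi$ of $\xi^{m+1}-\xi^m=y\,\xi^{m+1}-y\mu\,\xi$ satisfies $|\xi|<1$. *)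

theory Defs
  imports "HOL-Analysis.Analysis"
begin

definition D_set :: "nat \<Rightarrow> real \<Rightarrow> complex set" where
  "D_set m y = {\<mu>. \<forall>\<xi>::complex.
      \<xi>^(m+1) - \<xi>^m = complex_of_real y * \<xi>^(m+1) - complex_of_real y * \<mu> * \<xi> \<longrightarrow> norm \<xi> < 1}"

text \<open>Stability of the theta-method (theta = 1, u = 0) with step h = tau/m:
  every solution y of the recursion, for arbitrary starting values y(-m),...,y(0),
  tends to 0.\<close>
definition theta_stable :: "complex^'n^'n \<Rightarrow> complex^'n^'n \<Rightarrow> real \<Rightarrow> nat \<Rightarrow> bool" where
  "theta_stable A B h m \<longleftrightarrow>
     (\<forall>y :: int \<Rightarrow> complex^'n.
        (\<forall>n::nat. y (int n + 1) = y (int n) +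
            complex_of_real h *s (- (A *v y (int n + 1)) + B *v y (int n - int m + 1)))
        \<longrightarrow> (\<lambda>n::nat. y (int n)) \<longlonglongrightarrow> 0)"

end

theory Submission
  imports Defs "HOL-Complex_Analysis.Cauchy_Integral_Formula"
    "HOL-Computational_Algebra.Fundamental_Theorem_Algebra"
begin

text \<open>
  In an eigenbasis of \<open>A\<close> and \<open>B\<close> the method decouples into the scalar recurrences
  \<open>(1 + s) c\<^sub>n\<^sub>+\<^sub>1 = c\<^sub>n + s \<mu> c\<^sub>n\<^sub>-\<^sub>m\<^sub>+\<^sub>1\<close> with \<open>s = \<lambda>\<^sub>i h\<close>, \<open>\<mu> = \<mu>\<^sub>i\<close>, which are stable
  (by a generating function argument) when the characteristic polynomial
  \<open>(1 + s) - x - s \<mu> x\<^sup>m\<close> has no root in the closed unit disc. Substituting \<open>\<xi> = 1/x\<close>, this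
  says that \<open>\<mu>\<close> is not a value of \<open>g\<^sub>c(\<xi>) = (1 + c) \<xi>\<^sup>m - c \<xi>\<^sup>m\<^sup>-\<^sup>1\<close>, \<open>c = 1/s\<close>, on \<open>|\<xi>| \<ge> 1\<close>, and
  the hypothesis \<open>\<mu>\<^sub>i \<in> D\<^sub>y\<^sub>j\<close> says exactly this for the smallest \<open>c = 1/(\<lambda>\<^sub>j h)\<close>.
  So everything rests on the images \<open>g\<^sub>c({|\<xi>| \<ge> 1})\<close> shrinking as \<open>c\<close> grows. If
  \<open>\<mu> = g\<^sub>c\<^sub>'(x)\<close> with \<open>|x| > 1\<close> and \<open>c \<le> c'\<close> were not attained by \<open>g\<^sub>c\<close> outside the disc, all
  roots of \<open>g\<^sub>c - \<mu>\<close> would lie inside it, so the Blaschke product estimate gives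
  \<open>|x\<^sup>m (g\<^sub>c - \<mu>)(1/x\<^sup>*)\<^sup>*| < |g\<^sub>c(x) - \<mu>|\<close>; an explicit computation gives the opposite
  inequality. The boundary case \<open>|x| = 1\<close> follows since these images are closed.
\<close>

lemma fps_coeffs_tendsto_zero_if_poly_denominator:
  fixes Q :: "complex poly" and w :: "nat \<Rightarrow> complex"
  assumes root_free: "\<And>x. norm x \<le> 1 \<Longrightarrow> poly Q x \<noteq> 0"
    and numerator: "\<forall>\<^sub>F n in sequentially. fps_nth (fps_of_poly Q * Abs_fps w) n = 0"
  shows "w \<longlonglongrightarrow> 0"
proof -
  define W where "W = Abs_fps w"
  define P where "P = fps_of_poly Q * W"
  have "fps_conv_radius P = fps_conv_radius (0 :: complex fps)"
    unfolding fps_conv_radius_def using numerator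
    by (intro conv_radius_cong') (simp add: P_def W_def)
  then have radius_P: "fps_conv_radius P = \<infinity>" by simp
  have "Q \<noteq> 0" using root_free[of 0] by auto
  then have "finite {x. poly Q x = 0}" by (rule poly_roots_finite)
  have roots_outside: "norm x > 1" if "poly Q x = 0" for x
    using root_free[of x] that by fastforce
  obtain r where r: "r > 1" and no_roots: "\<And>x. norm x < r \<Longrightarrow> poly Q x \<noteq> 0"
  proof (cases "{x. poly Q x = 0} = {}")
    case True
    then show ?thesis using that[of 2] by auto
  next
    case False
    let ?r = "Min (norm ` {x. poly Q x = 0})"
    show ?thesis
    proof (rule that[of ?r])
      show "?r > 1" using False \<open>finite _\<close> roots_outside by auto
      show "poly Q x \<noteq> 0" if "norm x < ?r" for x
      proof
        assume "poly Q x = 0"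
        then have "?r \<le> norm x" using \<open>finite _\<close> by (intro Min_le) auto
        with that show False by simp
      qed
    qed
  qed
  have "fps_conv_radius (inverse (fps_of_poly Q)) \<ge> min (ereal r) (fps_conv_radius (fps_of_poly Q))"
    by (rule fps_conv_radius_inverse) (use no_roots in auto)
  then have radius_inverse: "fps_conv_radius (inverse (fps_of_poly Q)) \<ge> ereal r" by simp
  have "fps_nth (fps_of_poly Q) 0 \<noteq> 0" using root_free[of 0] by (simp add: poly_0_coeff_0)
  then have "W = inverse (fps_of_poly Q) * P"
    by (simp add: P_def mult.assoc[symmetric] inverse_mult_eq_1)
  then have "fps_conv_radius W \<ge> min (fps_conv_radius (inverse (fps_of_poly Q))) (fps_conv_radius P)"
    by (simp add: fps_conv_radius_mult)
  with radius_inverse radius_P r have "ereal (norm (1::complex)) < fps_conv_radius W"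
    by (auto intro: less_le_trans[of _ "ereal r"])
  from summable_fps[OF this] have "summable w" by (simp add: W_def)
  then show ?thesis by (rule summable_LIMSEQ_zero)
qed

lemma delay_recurrence_tendsto_zero:
  fixes z :: "int \<Rightarrow> complex" and a b :: complex
  assumes m: "m \<ge> 1"
    and rec: "\<And>n::nat. a * z (int n + 1) = z (int n) + b * z (int n - int m + 1)"
    and root_free: "\<And>x. norm x \<le> 1 \<Longrightarrow> a - x - b * x^m \<noteq> 0"
  shows "(\<lambda>n::nat. z (int n)) \<longlonglongrightarrow> 0"
proof -
  define w where "w k = z (int k - int m + 1)" for k :: nat
  define Q :: "complex poly" where "Q = [:a, -1:] - monom b m"
  have "fps_nth (fps_of_poly Q * Abs_fps w) (n + m) = 0" for n
  proof -
    have "fps_of_poly Q * Abs_fps w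
        = fps_const a * Abs_fps w - fps_X * Abs_fps w - fps_const b * (fps_X ^ m * Abs_fps w)"
      by (simp add: Q_def fps_of_poly_diff fps_of_poly_pCons fps_of_poly_monom fps_of_poly_const
          fps_const_neg [symmetric] algebra_simps del: fps_const_neg)
    then have "fps_nth (fps_of_poly Q * Abs_fps w) (n + m) = a * w (n + m) - w (n + m - 1) - b * w n"
      using m by (simp add: fps_X_power_mult_nth)
    also have "\<dots> = 0"
      using rec[of n] m by (simp add: w_def of_nat_diff)
    finally show ?thesis .
  qed
  then have "\<forall>\<^sub>F N in sequentially. fps_nth (fps_of_poly Q * Abs_fps w) N = 0"
    unfolding eventually_at_top_linorder by (metis add.commute le_add_diff_inverse)
  moreover have "poly Q x = a - x - b * x^m" for x
    by (simp add: Q_def poly_monom)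
  ultimately have "w \<longlonglongrightarrow> 0"
    using root_free by (intro fps_coeffs_tendsto_zero_if_poly_denominator) auto
  then have "(\<lambda>n. w (n + (m - 1))) \<longlonglongrightarrow> 0" by (rule LIMSEQ_ignore_initial_segment)
  moreover have "w (n + (m - 1)) = z (int n)" for n
    using m by (simp add: w_def of_nat_diff)
  ultimately show ?thesis by simp
qed

lemma norm_reflected_poly_less:
  fixes p :: "complex poly" and x :: complex
  assumes deg: "degree p > 0"
    and roots_inside: "\<And>z. poly p z = 0 \<Longrightarrow> norm z < 1"
    and x: "norm x > 1"
  shows "norm (x ^ degree p * cnj (poly p (1 / cnj x))) < norm (poly p x)"
proof -
  obtain r where r: "smult (lead_coeff p) (\<Prod>i<degree p. [:- r i, 1:]) = p"
    using complex_poly_decompose' by blast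
  have poly_p: "poly p z = lead_coeff p * (\<Prod>i<degree p. z - r i)" for z
    by (subst r [symmetric]) (simp add: poly_prod)
  have r_inside: "norm (r i) < 1" if "i < degree p" for i
    using that by (intro roots_inside) (auto simp: poly_p)
  have "x \<noteq> 0" using x by auto
  have "x ^ degree p * cnj (poly p (1 / cnj x))
      = cnj (lead_coeff p) * (\<Prod>i<degree p. x * (1 / x - cnj (r i)))"
    by (simp add: poly_p prod.distrib)
  also have "\<dots> = cnj (lead_coeff p) * (\<Prod>i<degree p. 1 - cnj (r i) * x)"
    using \<open>x \<noteq> 0\<close> by (intro arg_cong[where f = "(*) _"] prod.cong) (simp_all add: field_simps)
  finally have reflected: "x ^ degree p * cnj (poly p (1 / cnj x))
      = cnj (lead_coeff p) * (\<Prod>i<degree p. 1 - cnj (r i) * x)" .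
  \<comment> \<open>\<open>(1 - r\<^sup>* x) / (x - r)\<close> is a Blaschke factor, of modulus less than one for \<open>|x| > 1\<close>.\<close>
  have factor_less: "norm (1 - cnj (r i) * x) < norm (x - r i)" if "i < degree p" for i
  proof -
    have "norm (x - r i)^2 - norm (1 - cnj (r i) * x)^2 = (norm x^2 - 1) * (1 - norm (r i)^2)"
      by (simp only: cmod_power2) (simp add: algebra_simps power2_eq_square)
    moreover have "(norm x^2 - 1) * (1 - norm (r i)^2) > 0"
      using x r_inside[OF that] by (intro mult_pos_pos) (auto simp: abs_square_less_1)
    ultimately show ?thesis by (auto intro: power2_less_imp_less)
  qed
  have "(\<Prod>i<degree p. norm (1 - cnj (r i) * x)) < (\<Prod>i<degree p. norm (x - r i))"
  proof (intro prod_mono_strict[of 0])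
    show "0 < norm (x - r i)" if "i \<in> {..<degree p}" for i
      using factor_less that le_less_trans[OF norm_ge_zero] by blast
  qed (use deg factor_less in \<open>auto simp: less_imp_le\<close>)
  moreover have "lead_coeff p \<noteq> 0" using deg by auto
  ultimately show ?thesis
    unfolding reflected by (simp add: poly_p norm_mult prod_norm)
qed

definition delay_map :: "nat \<Rightarrow> real \<Rightarrow> complex \<Rightarrow> complex" where
  "delay_map m c z = of_real (1 + c) * z ^ m - of_real c * z ^ (m - 1)"

lemma delay_map_poly:
  assumes "m \<ge> 1" "c \<ge> 0"
  obtains p :: "complex poly" where "degree p = m" "\<And>z. poly p z = delay_map m c z - \<mu>"
proof
  let ?p = "monom (of_real (1 + c)) m + (monom (- of_real c) (m - 1) + [:- \<mu>:])"
  have "degree (monom (- of_real c) (m - 1) + [:- \<mu>:]) < m"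
    using assms by (intro le_less_trans[OF degree_add_le]) (auto intro: le_less_trans[OF degree_monom_le])
  moreover have "degree (monom (of_real (1 + c) :: complex) m) = m"
    using assms by (intro degree_monom_eq) (simp del: of_real_add)
  ultimately show "degree ?p = m" by (subst degree_add_eq_left) auto
  show "poly ?p z = delay_map m c z - \<mu>" for z
    by (simp add: delay_map_def poly_monom)
qed

lemma delay_map_reflection:
  assumes "m \<ge> 1" "x \<noteq> 0"
  shows "x ^ m * cnj (delay_map m c (1 / cnj x) - \<mu>) = (1 + c) - c * x - cnj \<mu> * x ^ m"
proof -
  obtain k where "m = Suc k" using assms by (cases m) auto
  then show ?thesis using assms(2) by (simp add: delay_map_def algebra_simps power_divide field_simps)
qed

lemma norm_le_norm_delay_map:
  assumes z: "norm z \<ge> 1" and c: "c \<ge> 0" and m: "m \<ge> 1"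
  shows "norm z \<le> norm (delay_map m c z)"
proof -
  obtain k where "m = Suc k" using m by (cases m) auto
  then have factor: "delay_map m c z = z ^ k * ((1 + c) * z - c)"
    by (simp add: delay_map_def algebra_simps)
  have "norm ((1 + c) * z) \<le> norm ((1 + c) * z - c) + norm (of_real c :: complex)"
    using norm_triangle_sub[of "(1 + c) * z" "(1 + c) * z - c"] by simp
  moreover have "norm ((1 + c) * z) = (1 + c) * norm z"
    using c by (simp add: norm_mult del: of_real_add)
  moreover have "c \<le> c * norm z" using c z mult_left_mono[of 1 "norm z" c] by simp
  ultimately have "norm z \<le> norm ((1 + c) * z - c)" using c by (simp add: algebra_simps)
  also have "\<dots> \<le> norm (z ^ k) * norm ((1 + c) * z - c)"
    using z mult_right_mono[of 1 "norm (z ^ k)" "norm ((1 + c) * z - c)"] by (simp add: norm_power)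
  finally show ?thesis by (simp add: factor norm_mult)
qed

lemma closed_delay_map_exterior:
  assumes "m \<ge> 1" "c \<ge> 0"
  shows "closed (delay_map m c ` (- ball 0 1))"
  unfolding closed_def open_contains_ball
proof (intro ballI)
  fix \<mu> assume \<mu>: "\<mu> \<in> - delay_map m c ` (- ball 0 1)"
  define K where "K = cball (0 :: complex) (norm \<mu> + 1) - ball 0 1"
  \<comment> \<open>Values near \<open>\<mu>\<close> can only be attained on the compact annulus \<open>K\<close>.\<close>
  have "compact (delay_map m c ` K)"
    unfolding K_def delay_map_def by (intro compact_continuous_image continuous_intros compact_diff) auto
  moreover have "\<mu> \<notin> delay_map m c ` K" using \<mu> by (auto simp: K_def)
  ultimately obtain e where e: "e > 0" "ball \<mu> e \<inter> delay_map m c ` K = {}"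
    by (metis compact_imp_closed open_Compl open_contains_ball_eq disjoint_eq_subset_Compl ComplI)
  have "ball \<mu> (min e 1) \<subseteq> - delay_map m c ` (- ball 0 1)"
  proof
    fix \<nu> assume \<nu>: "\<nu> \<in> ball \<mu> (min e 1)"
    show "\<nu> \<in> - delay_map m c ` (- ball 0 1)"
    proof
      assume "\<nu> \<in> delay_map m c ` (- ball 0 1)"
      then obtain z where z: "norm z \<ge> 1" "\<nu> = delay_map m c z" by (auto simp: not_less)
      have "norm z \<le> norm \<nu>" using norm_le_norm_delay_map[OF z(1) assms(2,1)] z(2) by simp
      also have "\<dots> \<le> norm \<mu> + 1" using \<nu> norm_triangle_ineq2[of \<nu> \<mu>] by (auto simp: dist_norm norm_minus_commute)
      finally have "z \<in> K" using z(1) by (simp add: K_def)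
      then show False using e(2) \<nu> z(2) by auto
    qed
  qed
  then show "\<exists>e>0. ball \<mu> e \<subseteq> - delay_map m c ` (- ball 0 1)" using e(1) by (intro exI[of _ "min e 1"]) auto
qed

lemma delay_reflection_gap_nonneg:
  fixes R T c c' a :: real
  assumes R: "1 \<le> R" and T: "1 \<le> T" and c: "0 \<le> c" "c \<le> c'" and a: "\<bar>a\<bar> \<le> R"
  defines "A \<equiv> 1 + c - (1 + c') * T^2 * R^2" and "B \<equiv> c' * T^2 - c"
  shows "(c' - c)^2 * T^2 * (R^2 + 1 - 2 * a) \<le> A^2 + 2 * A * B * a + B^2 * R^2"
proof -
  define F where "F a = A^2 + 2 * A * B * a + B^2 * R^2 - (c' - c)^2 * T^2 * (R^2 + 1 - 2 * a)" for a
  \<comment> \<open>\<open>F\<close> is affine in \<open>a\<close>, so it suffices to check the endpoints \<open>a = \<plusminus>R\<close>.\<close>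
  have "(c' - c) * T * (R - 1) \<le> - (A + B * R)"
  proof -
    have "T \<le> T^2 * R" using R T by (simp add: power2_eq_square mult_le_cancel_left1 order_trans)
    then have "T * (1 + (1 + c') * (R - 1)) \<le> T^2 * R * (1 + (1 + c') * (R - 1))"
      using R c by (intro mult_right_mono) auto
    moreover have "- (A + B * R) - (c' - c) * T * (R - 1)
        = (T^2 * R * (1 + (1 + c') * (R - 1)) - T * (1 + (1 + c') * (R - 1)))
          + (T - 1) + T * (R - 1) + c * (R - 1) + c * T * (R - 1)"
      by (simp add: A_def B_def algebra_simps power2_eq_square)
    moreover have "0 \<le> (T - 1) + T * (R - 1) + c * (R - 1) + c * T * (R - 1)" using R T c by simp
    ultimately show ?thesis by linarith
  qed
  then have "((c' - c) * T * (R - 1))^2 \<le> (- (A + B * R))^2"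
    using R T c by (intro power_mono) auto
  then have F_R: "F R \<ge> 0" by (simp add: F_def algebra_simps power2_eq_square)
  have "(c' - c) * T * (R + 1) \<le> B * R - A"
  proof -
    have TR: "T * R \<ge> 1" using R T by (metis mult_mono mult_1_right order_trans zero_le_one)
    then have "1 \<le> T^2 * R^2" by (metis one_le_power power_mult_distrib)
    moreover have "0 \<le> c' * (R + 1) * T * (T * R - 1)" "0 \<le> c * (R + 1) * (T - 1)"
      using R T c TR by auto
    moreover have "B * R - A - (c' - c) * T * (R + 1)
        = (T^2 * R^2 - 1) + c' * (R + 1) * T * (T * R - 1) + c * (R + 1) * (T - 1)"
      by (simp add: A_def B_def algebra_simps power2_eq_square)
    ultimately show ?thesis by linarith
  qed
  then have "((c' - c) * T * (R + 1))^2 \<le> (B * R - A)^2"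
    using R T c by (intro power_mono) auto
  then have F_minus_R: "F (- R) \<ge> 0" by (simp add: F_def algebra_simps power2_eq_square)
  have "2 * R * F a = (R + a) * F R + (R - a) * F (- R)"
    by (simp add: F_def algebra_simps power2_eq_square)
  also have "\<dots> \<ge> 0"
    using mult_nonneg_nonneg[OF _ F_R, of "R + a"] mult_nonneg_nonneg[OF _ F_minus_R, of "R - a"] a
    by linarith
  finally have "F a \<ge> 0" using R by (simp add: zero_le_mult_iff)
  then show ?thesis by (simp add: F_def)
qed

lemma norm_delay_map_diff_le_reflected:
  fixes x :: complex and c c' :: real
  assumes m: "m \<ge> 1" and x: "norm x \<ge> 1" and c: "0 \<le> c" "c \<le> c'"
  shows "norm (delay_map m c x - delay_map m c' x)
           \<le> norm ((1 + c) - c * x - cnj (delay_map m c' x) * x ^ m)"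
proof -
  obtain k where k: "m = Suc k" using m by (cases m) auto
  define R where "R = norm x"
  define T where "T = R ^ k"
  define A where "A = 1 + c - (1 + c') * T^2 * R^2"
  define B where "B = c' * T^2 - c"
  have R: "R \<ge> 1" and T: "T \<ge> 1" using x by (simp_all add: R_def T_def)
  have norm_xk: "norm (x ^ k) = T" by (simp add: T_def R_def norm_power)
  have cnj_x: "cnj x * x = of_real (R^2)" and cnj_xk: "cnj x ^ k * x ^ k = of_real (T^2)"
    using complex_norm_square[of x] complex_norm_square[of "x ^ k"]
    by (simp_all add: R_def norm_xk mult.commute)
  have left: "delay_map m c x - delay_map m c' x = - of_real (c' - c) * x ^ k * (x - 1)"
    by (simp add: delay_map_def k algebra_simps)
  have "cnj (delay_map m c' x) * x ^ m
      = (1 + c') * (cnj x ^ k * x ^ k) * (cnj x * x) - c' * (cnj x ^ k * x ^ k) * x"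
    by (simp add: delay_map_def k algebra_simps)
  also have "\<dots> = of_real ((1 + c') * T^2 * R^2) - of_real (c' * T^2) * x"
    by (simp only: cnj_x cnj_xk) simp
  finally have right: "(1 + c) - c * x - cnj (delay_map m c' x) * x ^ m = of_real A + of_real B * x"
    by (simp add: A_def B_def algebra_simps)
  have R_sq: "R^2 = Re x ^ 2 + Im x ^ 2" by (simp add: R_def cmod_power2)
  have "norm (delay_map m c x - delay_map m c' x)^2 = (c' - c)^2 * T^2 * (R^2 + 1 - 2 * Re x)"
    using c R_sq by (simp add: left norm_mult norm_xk power_mult_distrib cmod_power2 power2_diff)
      (simp add: algebra_simps)
  also have "\<dots> \<le> A^2 + 2 * A * B * Re x + B^2 * R^2"
    unfolding A_def B_def using R T c abs_Re_le_cmod[of x]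
    by (intro delay_reflection_gap_nonneg) (simp_all add: R_def)
  also have "\<dots> = (A + B * Re x)^2 + (B * Im x)^2"
    using R_sq by (simp add: power2_eq_square algebra_simps)
  also have "\<dots> = norm ((1 + c) - c * x - cnj (delay_map m c' x) * x ^ m)^2"
    unfolding right by (simp add: cmod_power2)
  finally show ?thesis by (rule power2_le_imp_le) simp
qed

lemma delay_map_outside_disc_in_exterior_image:
  assumes m: "m \<ge> 1" and c: "0 \<le> c" "c \<le> c'" and x: "norm x > 1"
  shows "delay_map m c' x \<in> delay_map m c ` (- ball 0 1)"
proof (rule ccontr)
  define \<mu> where "\<mu> = delay_map m c' x"
  assume "\<mu> \<notin> delay_map m c ` (- ball 0 1)"
  then have roots_inside: "norm z < 1" if "delay_map m c z = \<mu>" for z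
    using that by (metis ComplI image_eqI mem_ball_0)
  obtain p where p: "degree p = m" "\<And>z. poly p z = delay_map m c z - \<mu>"
    using delay_map_poly m c(1) by blast
  have "x \<noteq> 0" using x by auto
  have "norm ((1 + c) - c * x - cnj \<mu> * x ^ m) = norm (x ^ degree p * cnj (poly p (1 / cnj x)))"
    using delay_map_reflection[OF m \<open>x \<noteq> 0\<close>, of c \<mu>] by (simp add: p)
  also have "\<dots> < norm (poly p x)"
    using p roots_inside m x by (intro norm_reflected_poly_less) auto
  finally have "norm ((1 + c) - c * x - cnj \<mu> * x ^ m) < norm (delay_map m c x - \<mu>)"
    by (simp add: p)
  moreover have "norm (delay_map m c x - \<mu>) \<le> norm ((1 + c) - c * x - cnj \<mu> * x ^ m)"
    unfolding \<mu>_def using m x c by (intro norm_delay_map_diff_le_reflected) auto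
  ultimately show False by simp
qed

lemma delay_map_exterior_image_mono:
  assumes m: "m \<ge> 1" and c: "0 \<le> c" "c \<le> c'"
  shows "delay_map m c' ` (- ball 0 1) \<subseteq> delay_map m c ` (- ball 0 1)"
proof (rule image_subsetI)
  fix x :: complex assume "x \<in> - ball 0 1"
  then have x: "norm x \<ge> 1" by simp
  let ?f = "\<lambda>t. delay_map m c' (of_real (1 + t) * x)"
  \<comment> \<open>Approach \<open>x\<close> radially from \<open>|x| > 1\<close>, where the previous lemma applies.\<close>
  have "continuous (at_right 0) ?f" unfolding delay_map_def by (intro continuous_intros)
  then have "(?f \<longlongrightarrow> delay_map m c' x) (at_right 0)" by (simp add: continuous_within)
  moreover have "\<forall>\<^sub>F t in at_right 0. ?f t \<in> delay_map m c ` (- ball 0 1)"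
    using eventually_at_right_less[of "0 :: real"]
  proof eventually_elim
    case (elim t)
    have "1 < (1 + t) * 1" using elim by simp
    also have "\<dots> \<le> (1 + t) * norm x" using elim x by (intro mult_left_mono) auto
    also have "\<dots> = norm (of_real (1 + t) * x)" using elim by (simp add: norm_mult del: of_real_add)
    finally show ?case by (rule delay_map_outside_disc_in_exterior_image[OF m c])
  qed
  ultimately show "delay_map m c' x \<in> delay_map m c ` (- ball 0 1)"
    using closed_delay_map_exterior[OF m c(1)] by (intro Lim_in_closed_set) auto
qed

lemma D_set_subset_delay_map_exterior_compl:
  assumes m: "m \<ge> 1" and S: "S > 0"
  shows "D_set m (- S) \<subseteq> - delay_map m (1 / S) ` (- ball 0 1)"
proof (intro subsetI ComplI)
  fix \<mu> assume \<mu>: "\<mu> \<in> D_set m (- S)" and "\<mu> \<in> delay_map m (1 / S) ` (- ball 0 1)"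
  then obtain \<xi> where \<xi>: "norm \<xi> \<ge> 1" "\<mu> = delay_map m (1 / S) \<xi>" by (auto simp: not_less)
  obtain k where k: "m = Suc k" using m by (cases m) auto
  have "\<xi> ^ (m + 1) - \<xi> ^ m = of_real (- S) * \<xi> ^ (m + 1) - of_real (- S) * \<mu> * \<xi>"
    using S by (simp add: \<xi>(2) delay_map_def k field_simps)
  then have "norm \<xi> < 1" using \<mu> by (simp add: D_set_def)
  with \<xi>(1) show False by simp
qed

lemma theta_char_poly_root_free:
  assumes m: "m \<ge> 1" and s: "s > 0" and \<mu>: "\<mu> \<notin> delay_map m (1 / s) ` (- ball 0 1)"
    and x: "norm x \<le> 1"
  shows "(1 + of_real s) - x - of_real s * \<mu> * x ^ m \<noteq> 0"
proof
  assume root: "(1 + of_real s) - x - of_real s * \<mu> * x ^ m = 0"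
  obtain k where k: "m = Suc k" using m by (cases m) auto
  have "x \<noteq> 0"
  proof
    assume "x = 0"
    with root k have "complex_of_real (1 + s) = 0" by simp
    with s show False by (simp only: of_real_eq_0_iff)
  qed
  have "delay_map m (1 / s) (1 / x) = \<mu>"
    using root \<open>x \<noteq> 0\<close> s by (simp add: delay_map_def k field_simps)
  moreover have "1 / x \<in> - ball 0 1" using x \<open>x \<noteq> 0\<close> by (simp add: norm_divide)
  ultimately show False using \<mu> by blast
qed

lemma matrix_vector_mult_eigenvector_coords:
  fixes M :: "'a::comm_ring_1^'n^'n" and v :: "'n \<Rightarrow> 'a^'n" and f :: "'n \<Rightarrow> 'a"
  assumes "\<And>i. M *v v i = f i *s v i"
  shows "M *v ((\<chi> r i. v i $ r) *v x) = (\<chi> r i. v i $ r) *v (\<chi> i. f i * x $ i)"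
proof -
  have "(M *v ((\<chi> r i. v i $ r) *v x)) $ r = (\<Sum>i\<in>UNIV. (M *v v i) $ r * x $ i)" for r
    by (simp add: matrix_vector_mult_def sum_distrib_left sum_distrib_right mult_ac) (rule sum.swap)
  then show ?thesis using assms by (simp add: vec_eq_iff matrix_vector_mult_def mult_ac)
qed

lemma theta_stable_if_modes_root_free:
  fixes A B :: "complex^'n^'n" and v :: "'n \<Rightarrow> complex^'n" and \<alpha> \<beta> :: "'n \<Rightarrow> complex"
  assumes m: "m \<ge> 1"
    and basis: "\<And>c :: 'n \<Rightarrow> complex. (\<Sum>i\<in>UNIV. c i *s v i) = 0 \<Longrightarrow> (\<forall>i. c i = 0)"
    and eigA: "\<And>i. A *v v i = \<alpha> i *s v i"
    and eigB: "\<And>i. B *v v i = \<beta> i *s v i"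
    and root_free: "\<And>i x. norm x \<le> 1 \<Longrightarrow> 1 + of_real h * \<alpha> i - x - of_real h * \<beta> i * x ^ m \<noteq> 0"
  shows "theta_stable A B h m"
  unfolding theta_stable_def
proof (intro allI impI)
  fix y :: "int \<Rightarrow> complex^'n"
  assume rec: "\<forall>n::nat. y (int n + 1) = y (int n) +
    complex_of_real h *s (- (A *v y (int n + 1)) + B *v y (int n - int m + 1))"
  define V :: "complex^'n^'n" where "V = (\<chi> r i. v i $ r)"
  have "V *v x = 0 \<Longrightarrow> x = 0" for x
    using basis[of "\<lambda>i. x $ i"]
    by (simp add: V_def vec_eq_iff matrix_vector_mult_def mult.commute)
  then obtain W where W: "W ** V = mat 1" using matrix_left_invertible_ker[of V] by blast
  then have "V ** W = mat 1" by (rule matrix_left_right_inverse1)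
  define c where "c k = W *v y k" for k
  have y_c: "y k = V *v c k" for k
    by (simp add: c_def matrix_vector_mul_assoc \<open>V ** W = mat 1\<close>)
  have W_V: "W *v (V *v u) = u" for u by (simp add: matrix_vector_mul_assoc W)
  have mode_rec: "(1 + of_real h * \<alpha> i) * c (int n + 1) $ i
      = c (int n) $ i + of_real h * \<beta> i * c (int n - int m + 1) $ i" for n i
  proof -
    have "c (int n + 1)
        = W *v (y (int n) + of_real h *s (B *v y (int n - int m + 1) - A *v y (int n + 1)))"
      using rec by (simp add: c_def)
    also have "\<dots> = c (int n) + of_real h *s
        ((\<chi> i. \<beta> i * c (int n - int m + 1) $ i) - (\<chi> i. \<alpha> i * c (int n + 1) $ i))"
      unfolding y_c V_def matrix_vector_mult_eigenvector_coords[OF eigA]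
        matrix_vector_mult_eigenvector_coords[OF eigB]
      by (simp add: matrix_vector_right_distrib matrix_vector_mult_diff_distrib
          vector_scalar_commute W_V[unfolded V_def])
    finally show ?thesis by (simp add: vec_eq_iff algebra_simps)
  qed
  have "(\<lambda>n. c (int n) $ i) \<longlonglongrightarrow> 0" for i
    using m mode_rec root_free by (rule delay_recurrence_tendsto_zero)
  then have "(\<lambda>n. (V *v c (int n)) $ j) \<longlonglongrightarrow> 0" for j
    unfolding matrix_vector_mult_def by (auto intro!: tendsto_null_sum tendsto_mult_right_zero)
  then show "(\<lambda>n::nat. y (int n)) \<longlonglongrightarrow> 0"
    unfolding y_c by (intro vec_tendstoI) simp
qed

theorem mainTheorem12:
  fixes A B :: "complex^'n^'n"
    and v :: "'n \<Rightarrow> complex^'n"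
    and lam :: "'n \<Rightarrow> real" and \<gamma> :: "'n \<Rightarrow> complex"
    and \<tau> :: real and m :: nat
  assumes tau_pos: "\<tau> > 0"
    and m_pos: "m \<ge> 1"
    and basis: "\<And>c :: 'n \<Rightarrow> complex. (\<Sum>i\<in>UNIV. c i *s v i) = 0 \<Longrightarrow> (\<forall>i. c i = 0)"
    and eigA: "\<And>i. A *v v i = complex_of_real (lam i) *s v i"
    and eigB: "\<And>i. B *v v i = \<gamma> i *s v i"
    and lam_pos: "\<And>i. lam i > 0"
    and inD: "\<And>i. \<gamma> i / complex_of_real (lam i)
                 \<in> D_set m (- (Max (range lam)) * (\<tau> / real m))"
  shows "theta_stable A B (\<tau> / real m) m"
proof (rule theta_stable_if_modes_root_free[OF m_pos basis eigA eigB])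
  fix i and x :: complex assume x: "norm x \<le> 1"
  define h where "h = \<tau> / real m"
  define S where "S = Max (range lam) * h"
  have h: "h > 0" using tau_pos m_pos by (simp add: h_def)
  have "lam i \<le> Max (range lam)" by simp
  then have s_le_S: "lam i * h \<le> S" using h by (simp add: S_def)
  have s: "lam i * h > 0" using lam_pos[of i] h by simp
  have "- Max (range lam) * (\<tau> / real m) = - S" by (simp only: S_def h_def mult_minus_left)
  then have "\<gamma> i / lam i \<notin> delay_map m (1 / S) ` (- ball 0 1)"
    using D_set_subset_delay_map_exterior_compl[OF m_pos, of S] inD[of i] s s_le_S by auto
  then have "\<gamma> i / lam i \<notin> delay_map m (1 / (lam i * h)) ` (- ball 0 1)"
    using delay_map_exterior_image_mono[OF m_pos, of "1 / S" "1 / (lam i * h)"] s s_le_S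
    by (auto simp: frac_le)
  from theta_char_poly_root_free[OF m_pos s this x]
  show "1 + of_real (\<tau> / real m) * of_real (lam i) - x - of_real (\<tau> / real m) * \<gamma> i * x ^ m \<noteq> 0"
    using lam_pos[of i] by (simp add: h_def mult_ac)
qed

end
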